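(* For every positive integer $m$, $$\sum_{k\ge 0}(-1)^k\binom{2m}{m+3k}=3^{m-1}+\frac12\binom{2m}{m},$$ where binomial coefficients $\binom{2m}{j}$ with $j>2m$ are zero. *)

theory Defs
  imports Complex_Main
begin

end

theory Submission
  imports Defs
begin

text \<open>A roots-of-unity filter with \<open>\<omega> = e^{i\<pi>/3}\<close>: the weight
  \<open>(2 Re \<omega>^n + (-1)^n) / 3\<close> is \<open>(-1)^k\<close> at \<open>n = 3k\<close> and vanishes off the
  multiples of 3. Against the row \<open>C(2m, j)\<close>, recentred by the shift \<open>5m \<equiv> -m (mod 6)\<close>,
  the binomial theorem and \<open>(1 + \<omega>)^2 = 3\<omega>\<close> give the total \<open>2 \<cdot> 3^(m-1)\<close>.
  Both the weight and the binomial row are symmetric about the centre \<open>j = m\<close>, so this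
  total is twice the one-sided sum of the theorem minus the central term \<open>C(2m, m)\<close>.\<close>

lemma power_eq_power_mod:
  fixes x :: "'a::monoid_mult"
  assumes "x ^ k = 1"
  shows "x ^ n = x ^ (n mod k)"
proof -
  have "x ^ n = x ^ (k * (n div k) + n mod k)"
    by simp
  also have "\<dots> = (x ^ k) ^ (n div k) * x ^ (n mod k)"
    by (simp only: power_add power_mult)
  finally show ?thesis
    using assms by simp
qed

lemma sum_atMost_double_symmetric:
  fixes g :: "nat \<Rightarrow> 'a::comm_semiring_1"
  assumes "\<And>t. t \<le> m \<Longrightarrow> g (m - t) = g (m + t)"
  shows "(\<Sum>j\<le>2*m. g j) + g m = 2 * (\<Sum>t\<le>m. g (m + t))"
proof -
  have split: "{..2*m} = {..m} \<union> {m..2*m}" and overlap: "{..m} \<inter> {m..2*m} = {m}"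
    by auto
  have "(\<Sum>j\<le>m. g j) = (\<Sum>t\<le>m. g (m - t))"
    using sum.atLeastAtMost_rev[of g 0 m] by (simp add: atLeast0AtMost)
  also have "\<dots> = (\<Sum>t\<le>m. g (m + t))"
    using assms by (rule sum.cong [OF refl]) simp
  finally have lower: "(\<Sum>j\<le>m. g j) = (\<Sum>t\<le>m. g (m + t))" .
  have upper: "(\<Sum>j\<in>{m..2*m}. g j) = (\<Sum>t\<le>m. g (m + t))"
    using sum.shift_bounds_cl_nat_ivl[of g 0 m m]
    by (simp add: atLeast0AtMost mult_2 add.commute)
  show ?thesis
    using sum.union_inter[of "{..m}" "{m..2*m}" g] split overlap lower upper
    by (simp add: mult_2)
qed

definition omega :: complex where
  "omega = Complex (1/2) (sqrt 3 / 2)"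

lemma Re_omega: "Re omega = 1 / 2"
  by (simp add: omega_def)

lemma omega_squared: "omega ^ 2 = omega - 1"
  by (simp add: omega_def complex_eq_iff power2_eq_square field_simps)

lemma omega_cubed: "omega ^ 3 = -1"
proof -
  have "omega ^ 3 = (omega - 1) * omega"
    by (simp flip: omega_squared add: power2_eq_square power3_eq_cube)
  also have "\<dots> = omega ^ 2 - omega"
    by (simp add: power2_eq_square algebra_simps)
  finally show ?thesis
    by (simp add: omega_squared)
qed

lemma omega_power_6: "omega ^ 6 = 1"
  using power_mult[of omega 3 2] by (simp add: omega_cubed)

lemma one_plus_omega_squared: "(1 + omega) ^ 2 = 3 * omega"
  using omega_squared by (simp add: power2_eq_square algebra_simps)

definition mod6_sign :: "nat \<Rightarrow> real" where
  "mod6_sign n = (if n mod 6 = 0 then 1 else if n mod 6 = 3 then -1 else 0)"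

lemma mod6_sign_add_mult_6 [simp]: "mod6_sign (n + 6 * a) = mod6_sign n"
  by (simp add: mod6_sign_def)

lemma mod6_sign_eq_if_dvd_add:
  assumes "6 dvd (n + k)"
  shows "mod6_sign n = mod6_sign k"
proof -
  have "n mod 6 = 0 \<longleftrightarrow> k mod 6 = 0" and "n mod 6 = 3 \<longleftrightarrow> k mod 6 = 3"
    using assms by presburger+
  then show ?thesis
    by (simp add: mod6_sign_def)
qed

lemma mod6_sign_mult_3: "mod6_sign (3 * k) = (-1) ^ k"
proof (cases "even k")
  case True
  then have "3 * k mod 6 = 0" by presburger
  with True show ?thesis by (simp add: mod6_sign_def)
next
  case False
  then have "3 * k mod 6 = 3" by presburger
  with False show ?thesis by (simp add: mod6_sign_def)
qed

lemma mod6_sign_not_dvd_3: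
  assumes "\<not> 3 dvd n"
  shows "mod6_sign n = 0"
proof -
  have "n mod 6 \<noteq> 0" and "n mod 6 \<noteq> 3"
    using assms by presburger+
  then show ?thesis
    by (simp add: mod6_sign_def)
qed

lemma mod6_sign_eq_Re_omega_power: "mod6_sign n = (2 * Re (omega ^ n) + (-1) ^ n) / 3"
proof -
  define r where "r = n mod 6"
  have "r \<in> {0, 1, 2, 3, 4, 5}"
    by (auto simp: r_def)
  moreover have "omega ^ 4 = - omega" and "omega ^ 5 = 1 - omega"
    using power_add[of omega 1 3] power_add[of omega 2 3]
    by (simp_all add: omega_cubed omega_squared)
  ultimately have "mod6_sign r = (2 * Re (omega ^ r) + (-1) ^ r) / 3"
    by (auto simp: mod6_sign_def omega_squared omega_cubed Re_omega)
  moreover have "omega ^ n = omega ^ r"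
    unfolding r_def using omega_power_6 by (rule power_eq_power_mod)
  moreover have "(-1::real) ^ n = (-1) ^ r"
    unfolding r_def by (rule power_eq_power_mod) simp
  moreover have "mod6_sign n = mod6_sign r"
    by (simp add: mod6_sign_def r_def)
  ultimately show ?thesis
    by simp
qed

lemma sum_binomial_power_shift:
  fixes x :: "'a::comm_semiring_1"
  shows "(\<Sum>j\<le>n. of_nat (n choose j) * x ^ (j + k)) = x ^ k * (1 + x) ^ n"
proof -
  have "(1 + x) ^ n = (\<Sum>j\<le>n. of_nat (n choose j) * x ^ j)"
    using binomial_ring[of x 1 n] by (simp add: add.commute)
  then show ?thesis
    by (simp add: sum_distrib_left power_add mult_ac)
qed

lemma sum_binomial_mod6_sign:
  assumes "m \<ge> 1"
  shows "(\<Sum>j\<le>2*m. real (2*m choose j) * mod6_sign (j + 5*m)) = 2 * 3 ^ (m - 1)"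
proof -
  have "(\<Sum>j\<le>2*m. of_nat (2*m choose j) * omega ^ (j + 5*m)) = omega ^ (5*m) * (1 + omega) ^ (2*m)"
    by (rule sum_binomial_power_shift)
  also have "(1 + omega) ^ (2*m) = 3 ^ m * omega ^ m"
    by (simp add: power_mult one_plus_omega_squared power_mult_distrib)
  also have "omega ^ (5*m) * (3 ^ m * omega ^ m) = 3 ^ m * omega ^ (5*m + m)"
    by (simp only: power_add mult_ac)
  also have "5*m + m = 6*m"
    by simp
  also have "omega ^ (6*m) = 1"
    by (simp only: power_mult omega_power_6 power_one)
  finally have "(\<Sum>j\<le>2*m. of_nat (2*m choose j) * omega ^ (j + 5*m)) = 3 ^ m"
    by simp
  from arg_cong[where f = Re, OF this]
  have roots: "(\<Sum>j\<le>2*m. real (2*m choose j) * Re (omega ^ (j + 5*m))) = 3 ^ m"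
    by simp
  have signs: "(\<Sum>j\<le>2*m. real (2*m choose j) * (-1) ^ (j + 5*m)) = 0"
    using assms sum_binomial_power_shift[of "2*m" "-1::real" "5*m"] by simp
  have "(\<Sum>j\<le>2*m. real (2*m choose j) * mod6_sign (j + 5*m))
      = (\<Sum>j\<le>2*m. 2 * (real (2*m choose j) * Re (omega ^ (j + 5*m)))
          + real (2*m choose j) * (-1) ^ (j + 5*m)) / 3"
    unfolding mod6_sign_eq_Re_omega_power sum_divide_distrib
    by (rule sum.cong) (simp_all add: field_simps)
  also have "\<dots> = (2 * (\<Sum>j\<le>2*m. real (2*m choose j) * Re (omega ^ (j + 5*m)))
          + (\<Sum>j\<le>2*m. real (2*m choose j) * (-1) ^ (j + 5*m))) / 3"
    by (simp add: sum.distrib sum_distrib_left)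
  also have "\<dots> = 2 * 3 ^ m / 3"
    by (simp add: roots signs)
  also have "\<dots> = 2 * 3 ^ (m - 1)"
    using assms by (cases m) simp_all
  finally show ?thesis .
qed

lemma sum_mod6_sign_eq_alternating_sum:
  fixes f :: "nat \<Rightarrow> real"
  shows "(\<Sum>t\<le>3*n. f t * mod6_sign t) = (\<Sum>k\<le>n. (-1) ^ k * f (3*k))"
proof -
  have "(\<Sum>t\<le>3*n. f t * mod6_sign t) = (\<Sum>t\<in>(\<lambda>k. 3*k) ` {..n}. f t * mod6_sign t)"
  proof (rule sum.mono_neutral_right)
    show "\<forall>t \<in> {..3*n} - (\<lambda>k. 3*k) ` {..n}. f t * mod6_sign t = 0"
    proof
      fix t
      assume t: "t \<in> {..3*n} - (\<lambda>k. 3*k) ` {..n}"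
      show "f t * mod6_sign t = 0"
      proof (cases "3 dvd t")
        case True
        then obtain k where "t = 3*k" ..
        with t show ?thesis by auto
      qed (simp add: mod6_sign_not_dvd_3)
    qed
  qed auto
  also have "\<dots> = (\<Sum>k\<le>n. (-1) ^ k * f (3*k))"
    by (simp add: sum.reindex inj_on_def mod6_sign_mult_3, simp add: mult.commute)
  finally show ?thesis .
qed

theorem lemma5:
  fixes m :: nat
  assumes "m \<ge> 1"
  shows "(\<Sum>k\<le>m. (-1::real) ^ k * real ((2*m) choose (m + 3*k)))
           = 3 ^ (m - 1) + real ((2*m) choose m) / 2"
proof -
  define g where "g j = real (2*m choose j) * mod6_sign (j + 5*m)" for j
  have upper_half: "g (m + t) = real (2*m choose (m + t)) * mod6_sign t" for t
    using mod6_sign_add_mult_6[of t m] by (simp add: g_def add_ac)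
  have "g (m - t) = g (m + t)" if "t \<le> m" for t
  proof -
    have "2*m choose (m - t) = 2*m choose (m + t)"
      using binomial_symmetric[of "m - t" "2*m"] that by simp
    moreover have "mod6_sign (m - t + 5*m) = mod6_sign t"
      using that by (intro mod6_sign_eq_if_dvd_add) simp
    ultimately show ?thesis
      unfolding upper_half by (simp add: g_def)
  qed
  then have "(\<Sum>j\<le>2*m. g j) + g m = 2 * (\<Sum>t\<le>m. g (m + t))"
    by (rule sum_atMost_double_symmetric)
  moreover have "(\<Sum>j\<le>2*m. g j) = 2 * 3 ^ (m - 1)"
    unfolding g_def by (rule sum_binomial_mod6_sign [OF assms])
  moreover have "g m = real (2*m choose m)"
    using upper_half[of 0] by (simp add: mod6_sign_def)
  moreover have "(\<Sum>t\<le>m. g (m + t)) = (\<Sum>k\<le>m. (-1) ^ k * real (2*m choose (m + 3*k)))"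
  proof -
    have "(\<Sum>t\<le>m. g (m + t)) = (\<Sum>t\<le>3*m. real (2*m choose (m + t)) * mod6_sign t)"
      unfolding upper_half by (rule sum.mono_neutral_left) auto
    also have "\<dots> = (\<Sum>k\<le>m. (-1) ^ k * real (2*m choose (m + 3*k)))"
      by (rule sum_mod6_sign_eq_alternating_sum)
    finally show ?thesis .
  qed
  ultimately show ?thesis
    by simp
qed

end
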